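(* Assume the setting and Assumption $( * )$ described in the context, and let $(y,w)$ be a solution of the integrated Maxey–Riley system on $[t_0,\infty)$. Then for every $\epsilon>0$, $w$ is $1/2$-Hölder continuous on $[t_0,t_0+\epsilon)$ and locally Lipschitz continuous on $[t_0+\epsilon,\infty)$.
   Context: Fix $n\ge 1$, a domain $\mathscr{D}\subseteq\mathbb{R}^n$, an initial time $t_0\ge 0$, a velocity field $u:\mathscr{D}\times[0,\infty)\to\mathbb{R}^n$, real constants $R,\mu,\kappa,\gamma>0$ and a constant vector $g\in\mathbb{R}^n$. Write $\frac{D}{Dt}=\partial_t+(u\cdot\nabla)$ and define $A_u,B_u:\mathscr{D}\times[t_0,\infty)\to\mathbb{R}^n$, $M_u:\mathscr{D}\times[t_0,\infty)\to\mathbb{R}^{n\times n}$ by $A_u=u+\frac{\gamma}{6}\mu^{-1}\Delta u$, $M_u=\nabla u+\frac{\gamma}{6}\mu^{-1}\nabla\Delta u$, $B_u=\left(\frac{3R}{2}-1\right)\left(\frac{Du}{Dt}-g\right)+\left(\frac{R}{20}-\frac16\right)\gamma\mu^{-1}\frac{D}{Dt}\Delta u-\frac{\gamma}{6}\mu^{-1}\left(\nabla u+\frac{\gamma}{6}\mu^{-1}\nabla\Delta u\right)\Delta u$. The integrated Maxey–Riley system is $y(t)=y_0+\int_{t_0}^t\big(w(s)+A_u(y(s),s)\big)\,ds$, $w(t)=w_0+\int_{t_0}^t\Big(-\mu w(s)-M_u(y(s),s)w(s)-\kappa\mu^{1/2}\frac{w(s)}{\sqrt{t-s}}+B_u(y(s),s)\Big)\,ds$.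 A solution on $[t_0,\infty)$ with initial condition $(y_0,w_0)$ is a pair of continuous maps $y:[t_0,\infty)\to\mathscr{D}$, $w:[t_0,\infty)\to\mathbb{R}^n$ satisfying both equations for every $t\ge t_0$. Assumption $( * )$: $u$ is smooth enough that the first-order partial derivatives in time and space of $A_u$ and $B_u$ exist, are continuous, and are uniformly bounded in time and space, i.e. there is $L_b$ with $\|\partial_tA_u\|_\infty,\|\nabla A_u\|_\infty,\|\partial_tB_u\|_\infty,\|\nabla B_u\|_\infty<L_b$. *)

theory Defs
  imports "HOL-Analysis.Analysis"
begin

definition pdx :: "'n::finite \<Rightarrow> (real^'n \<Rightarrow> real \<Rightarrow> 'b::real_normed_vector) \<Rightarrow> real^'n \<Rightarrow> real \<Rightarrow> 'b" where
  "pdx i f x t = vector_derivative (\<lambda>h. f (x + h *\<^sub>R axis i 1) t) (at 0)"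

definition pdt :: "real set \<Rightarrow> (real^'n \<Rightarrow> real \<Rightarrow> 'b::real_normed_vector) \<Rightarrow> real^'n \<Rightarrow> real \<Rightarrow> 'b" where
  "pdt T f x t = vector_derivative (\<lambda>s. f x s) (at t within T)"

definition lap :: "(real^'n::finite \<Rightarrow> real \<Rightarrow> 'b::real_normed_vector) \<Rightarrow> real^'n \<Rightarrow> real \<Rightarrow> 'b" where
  "lap f x t = (\<Sum>i\<in>UNIV. pdx i (pdx i f) x t)"

text \<open>Spatial Jacobian (nabla f)_{ij} = d f_i / d x_j, so (nabla f) v = (v . nabla) f.\<close>
definition jac :: "(real^'n::finite \<Rightarrow> real \<Rightarrow> real^'m::finite) \<Rightarrow> real^'n \<Rightarrow> real \<Rightarrow> real^'n^'m" where
  "jac f x t = (\<chi> i j. (pdx j f x t) $ i)"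

definition matdt :: "(real^'n::finite \<Rightarrow> real \<Rightarrow> real^'n) \<Rightarrow> (real^'n \<Rightarrow> real \<Rightarrow> 'b::real_normed_vector) \<Rightarrow> real^'n \<Rightarrow> real \<Rightarrow> 'b" where
  "matdt u f x t = pdt {0..} f x t + (\<Sum>j\<in>UNIV. (u x t $ j) *\<^sub>R pdx j f x t)"

definition A_u :: "real \<Rightarrow> real \<Rightarrow> (real^'n::finite \<Rightarrow> real \<Rightarrow> real^'n) \<Rightarrow> real^'n \<Rightarrow> real \<Rightarrow> real^'n" where
  "A_u mu gam u x t = u x t + (gam / 6 / mu) *\<^sub>R lap u x t"

definition M_u :: "real \<Rightarrow> real \<Rightarrow> (real^'n::finite \<Rightarrow> real \<Rightarrow> real^'n) \<Rightarrow> real^'n \<Rightarrow> real \<Rightarrow> real^'n^'n" where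
  "M_u mu gam u x t = jac u x t + (gam / 6 / mu) *\<^sub>R jac (lap u) x t"

definition B_u :: "real \<Rightarrow> real \<Rightarrow> real \<Rightarrow> real^'n \<Rightarrow> (real^'n::finite \<Rightarrow> real \<Rightarrow> real^'n) \<Rightarrow> real^'n \<Rightarrow> real \<Rightarrow> real^'n" where
  "B_u Rr mu gam g u x t =
     (3 * Rr / 2 - 1) *\<^sub>R (matdt u u x t - g)
   + ((Rr / 20 - 1 / 6) * gam / mu) *\<^sub>R matdt u (lap u) x t
   - (gam / 6 / mu) *\<^sub>R (M_u mu gam u x t *v lap u x t)"

definition C1_bounded :: "(real^'n::finite) set \<Rightarrow> real \<Rightarrow> (real^'n \<Rightarrow> real \<Rightarrow> 'b::real_normed_vector) \<Rightarrow> real \<Rightarrow> bool" where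
  "C1_bounded D t0 F L \<longleftrightarrow>
     (\<forall>x\<in>D. \<forall>t\<ge>t0.
        ((\<lambda>s. F x s) has_vector_derivative pdt {t0..} F x t) (at t within {t0..}) \<and>
        norm (pdt {t0..} F x t) < L \<and>
        (\<forall>i. ((\<lambda>h. F (x + h *\<^sub>R axis i 1) t) has_vector_derivative pdx i F x t) (at 0) \<and>
             norm (pdx i F x t) < L)) \<and>
     continuous_on (D \<times> {t0..}) (\<lambda>(x,t). pdt {t0..} F x t) \<and>
     (\<forall>i. continuous_on (D \<times> {t0..}) (\<lambda>(x,t). pdx i F x t))"

definition holder_on :: "real \<Rightarrow> real set \<Rightarrow> (real \<Rightarrow> 'b::real_normed_vector) \<Rightarrow> bool" where
  "holder_on a S f \<longleftrightarrow> (\<exists>C. \<forall>s\<in>S. \<forall>t\<in>S. norm (f t - f s) \<le> C * \<bar>t - s\<bar> powr a)"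

definition locally_lipschitz_on :: "real set \<Rightarrow> (real \<Rightarrow> 'b::real_normed_vector) \<Rightarrow> bool" where
  "locally_lipschitz_on S f \<longleftrightarrow>
     (\<forall>x\<in>S. \<exists>U C. open U \<and> x \<in> U \<and> C-lipschitz_on (U \<inter> S) f)"

end

theory Submission
  imports Defs
begin

text \<open>
  Let F collect the non-memory terms of the w-equation, evaluated along the solution, and let
  k = kappa sqrt mu. Then w solves the Abel-type Volterra equation
    w t + k * integral {t0..t} (w s / sqrt (t - s)) = w0 + integral {t0..t} F,
  and F is continuous: by Assumption (*) the partial derivatives of A_u and B_u are continuous
  and bounded, and M_u v = (sum over j) v_j * (partial_j A_u).

  Fix a step h. Subtracting the equation at \<tau> from the one at \<tau> + h and shifting the memory
  integral by h shows that \<phi> \<tau> = norm (w (\<tau> + h) - w \<tau>) satisfies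
    \<phi> \<tau> \<le> a h + b h / sqrt (\<tau> - t0 + h) + k * integral {t0..\<tau>} (\<phi> s / sqrt (\<tau> - s)),
  the middle term coming from the initial layer [t0, t0 + h]. For h \<le> 1 / (64 k^2) the maximum of
  exp (-(40 k)^2 (\<tau> - t0)) sqrt (\<tau> - t0 + h) \<phi> \<tau> absorbs the memory term, whence
  \<phi> t \<le> C h / sqrt (t - t0 + h) with C independent of h. Near t0 this is a 1/2-Hoelder bound,
  at distance \<epsilon> from t0 a Lipschitz bound.
\<close>

lemma norm_diff_le_of_vector_derivative_bound:
  fixes f :: "real \<Rightarrow> 'b::real_normed_vector"
  assumes "convex S" "\<And>x. x \<in> S \<Longrightarrow> (f has_vector_derivative f' x) (at x within S)"
    "\<And>x. x \<in> S \<Longrightarrow> norm (f' x) \<le> B" "x \<in> S" "y \<in> S"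
  shows "norm (f x - f y) \<le> B * \<bar>x - y\<bar>"
proof -
  have "norm (f x - f y) \<le> B * norm (x - y)"
  proof (rule differentiable_bound[OF assms(1) _ _ assms(4,5)])
    show "(f has_derivative (\<lambda>h. h *\<^sub>R f' z)) (at z within S)" if "z \<in> S" for z
      using assms(2)[OF that] by (simp add: has_vector_derivative_def)
    show "onorm (\<lambda>h. h *\<^sub>R f' z) \<le> B" if "z \<in> S" for z
      using assms(3)[OF that] onorm_scaleR_left[of "\<lambda>x. x" "f' z"] onorm_id[where 'a=real]
      by simp
  qed
  then show ?thesis by simp
qed

lemma exp_neg_le_inverse_one_plus: "x \<ge> 0 \<Longrightarrow> exp (- x) \<le> 1 / (1 + (x::real))"
  by (simp add: exp_minus inverse_eq_divide divide_left_mono add_pos_nonneg)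

lemma sqrt_mult_exp_neg_le:
  assumes "r > 0" "d \<ge> 0"
  shows "sqrt d * exp (- r\<^sup>2 * d / 2) \<le> 1 / r"
proof -
  have "r\<^sup>2 * d \<le> exp (r\<^sup>2 * d)" using exp_gt_self[of "r\<^sup>2 * d"] by simp
  also have "exp (r\<^sup>2 * d) = (exp (r\<^sup>2 * d / 2))\<^sup>2"
    by (simp add: power2_eq_square exp_add[symmetric])
  finally have "r * sqrt d \<le> exp (r\<^sup>2 * d / 2)"
    using assms by (metis exp_ge_zero real_sqrt_abs real_sqrt_le_iff real_sqrt_mult
        less_imp_le real_sqrt_unique)
  then have "r * (sqrt d * exp (- r\<^sup>2 * d / 2)) \<le> exp (r\<^sup>2 * d / 2) * exp (- r\<^sup>2 * d / 2)"
    by (simp add: mult.assoc[symmetric])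
  also have "\<dots> = 1" by (simp add: exp_add[symmetric])
  finally show ?thesis using assms by (simp add: field_simps)
qed

lemma sqrt_add_diff_le:
  assumes "d \<ge> 0" "h > 0"
  shows "sqrt (d + h) - sqrt d \<le> h / sqrt (d + h)"
proof -
  have "(sqrt (d + h) - sqrt d) * sqrt (d + h) \<le> (sqrt (d + h) - sqrt d) * (sqrt (d + h) + sqrt d)"
    using assms by (intro mult_left_mono) auto
  also have "\<dots> = h" using assms by (simp add: algebra_simps)
  finally show ?thesis using assms by (simp add: field_simps)
qed

lemma has_integral_inverse_sqrt_diff:
  assumes "a \<le> c" "c \<le> b"
  shows "((\<lambda>s. 1 / sqrt (b - s)) has_integral (2 * sqrt (b - a) - 2 * sqrt (b - c))) {a..c}"
proof -
  have "((\<lambda>s. 1 / sqrt (b - s)) has_integral (- 2 * sqrt (b - c) - (- 2 * sqrt (b - a)))) {a..c}"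
  proof (rule fundamental_theorem_of_calculus_interior[OF assms(1)])
    show "continuous_on {a..c} (\<lambda>s. - 2 * sqrt (b - s))"
      by (intro continuous_intros)
    fix x assume "x \<in> {a<..<c}"
    then have "((\<lambda>s. - 2 * sqrt (b - s)) has_real_derivative 1 / sqrt (b - x)) (at x)"
      using assms by (auto intro!: derivative_eq_intros simp: field_simps)
    then show "((\<lambda>s. - 2 * sqrt (b - s)) has_vector_derivative 1 / sqrt (b - x)) (at x)"
      by (simp add: has_real_derivative_iff_has_vector_derivative)
  qed
  then show ?thesis by (simp add: algebra_simps)
qed

lemma has_integral_inverse_sqrt_shifted:
  assumes "a \<le> c" "h > 0"
  shows "((\<lambda>s. 1 / sqrt (s - a + h)) has_integral (2 * sqrt (c - a + h) - 2 * sqrt h)) {a..c}"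
proof -
  have "((\<lambda>s. 1 / sqrt (s - a + h)) has_integral (2 * sqrt (c - a + h) - 2 * sqrt (a - a + h))) {a..c}"
  proof (rule fundamental_theorem_of_calculus_interior[OF assms(1)])
    show "continuous_on {a..c} (\<lambda>s. 2 * sqrt (s - a + h))"
      by (intro continuous_intros)
    fix x assume "x \<in> {a<..<c}"
    then have "((\<lambda>s. 2 * sqrt (s - a + h)) has_real_derivative 1 / sqrt (x - a + h)) (at x)"
      using assms by (auto intro!: derivative_eq_intros simp: field_simps)
    then show "((\<lambda>s. 2 * sqrt (s - a + h)) has_vector_derivative 1 / sqrt (x - a + h)) (at x)"
      by (simp add: has_real_derivative_iff_has_vector_derivative)
  qed
  then show ?thesis by simp
qed

lemma has_integral_arctan_kernel:
  assumes "m \<le> t" "r > 0"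
  shows "((\<lambda>s. 1 / ((1 + r\<^sup>2 * (t - s)) * sqrt (t - s))) has_integral
            (2 / r * arctan (r * sqrt (t - m)))) {m..t}"
proof -
  have "((\<lambda>s. 1 / ((1 + r\<^sup>2 * (t - s)) * sqrt (t - s))) has_integral
       (- (2 / r) * arctan (r * sqrt (t - t)) - (- (2 / r) * arctan (r * sqrt (t - m))))) {m..t}"
  proof (rule fundamental_theorem_of_calculus_interior[OF assms(1)])
    show "continuous_on {m..t} (\<lambda>s. - (2 / r) * arctan (r * sqrt (t - s)))"
      by (intro continuous_intros)
    fix x assume "x \<in> {m<..<t}"
    then have "r * sqrt (t - x) * (r * sqrt (t - x)) = r\<^sup>2 * (t - x)"
      by (simp add: power2_eq_square ac_simps)
    moreover have "0 < 1 + r\<^sup>2 * (t - x)"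
      using \<open>x \<in> {m<..<t}\<close> by (simp add: add_pos_nonneg)
    ultimately have "((\<lambda>s. - (2 / r) * arctan (r * sqrt (t - s))) has_real_derivative
        1 / ((1 + r\<^sup>2 * (t - x)) * sqrt (t - x))) (at x)"
      using assms(2) \<open>x \<in> {m<..<t}\<close> by (auto intro!: derivative_eq_intros simp: divide_simps)
    then show "((\<lambda>s. - (2 / r) * arctan (r * sqrt (t - s))) has_vector_derivative
        1 / ((1 + r\<^sup>2 * (t - x)) * sqrt (t - x))) (at x)"
      by (simp add: has_real_derivative_iff_has_vector_derivative)
  qed
  then show ?thesis by simp
qed

lemma absolutely_integrable_on_div_sqrt:
  fixes f :: "real \<Rightarrow> real"
  assumes "continuous_on {a..t} f"
  shows "(\<lambda>s. f s / sqrt (t - s)) absolutely_integrable_on {a..t}"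
proof (cases "a \<le> t")
  case True
  have "(\<lambda>s. 1 / sqrt (t - s)) absolutely_integrable_on {a..t}"
    by (rule nonnegative_absolutely_integrable_1)
       (use has_integral_inverse_sqrt_diff[OF True order_refl] in auto)
  then have "(\<lambda>s. f s * (1 / sqrt (t - s))) absolutely_integrable_on {a..t}"
    by (intro absolutely_integrable_bounded_measurable_product_real)
       (auto intro: continuous_imp_measurable_on_sets_lebesgue assms
             compact_imp_bounded compact_continuous_image)
  then show ?thesis by simp
qed simp

lemma weighted_kernel_integral_first_half:
  assumes r: "r > 0" and h: "h > 0" and t: "t0 < t"
  shows "integral {t0..(t0 + t) / 2} (\<lambda>s. exp (r\<^sup>2 * (s - t0)) / sqrt (s - t0 + h) / sqrt (t - s))
           \<le> 2 * exp (r\<^sup>2 * (t - t0) / 2)"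
proof -
  define d where "d = t - t0"
  define c where "c = exp (r\<^sup>2 * d / 2) * (sqrt 2 / sqrt d)"
  have d: "d > 0" "(t0 + t) / 2 - t0 = d / 2" using t by (auto simp: d_def)
  have "continuous_on {t0..(t0 + t) / 2} (\<lambda>s. exp (r\<^sup>2 * (s - t0)) / sqrt (s - t0 + h) / sqrt (t - s))"
    using h t by (intro continuous_intros) auto
  then have "integral {t0..(t0 + t) / 2} (\<lambda>s. exp (r\<^sup>2 * (s - t0)) / sqrt (s - t0 + h) / sqrt (t - s))
      \<le> c * (2 * sqrt ((t0 + t) / 2 - t0 + h) - 2 * sqrt h)"
  proof (rule has_integral_le[OF integrable_integral[OF integrable_continuous_real]
        has_integral_mult_right[OF has_integral_inverse_sqrt_shifted[OF _ h]]])
    fix s assume s: "s \<in> {t0..(t0 + t) / 2}"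
    have "1 / sqrt (t - s) \<le> 1 / sqrt (d / 2)"
      using s d by (intro divide_left_mono) (auto simp: d_def)
    also have "\<dots> = sqrt 2 / sqrt d" by (simp add: real_sqrt_divide)
    finally have "1 / sqrt (t - s) \<le> sqrt 2 / sqrt d" .
    moreover have "r\<^sup>2 * (s - t0) \<le> r\<^sup>2 * (d / 2)"
      using s by (intro mult_left_mono) (auto simp: d_def)
    then have "exp (r\<^sup>2 * (s - t0)) \<le> exp (r\<^sup>2 * d / 2)" by simp
    ultimately have "exp (r\<^sup>2 * (s - t0)) * (1 / sqrt (s - t0 + h)) * (1 / sqrt (t - s))
        \<le> exp (r\<^sup>2 * d / 2) * (1 / sqrt (s - t0 + h)) * (sqrt 2 / sqrt d)"
      using s h by (intro mult_mono) auto
    then show "exp (r\<^sup>2 * (s - t0)) / sqrt (s - t0 + h) / sqrt (t - s) \<le> c * (1 / sqrt (s - t0 + h))"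
      by (simp add: c_def ac_simps)
  qed (use t in auto)
  also have "\<dots> \<le> c * (2 * sqrt (d / 2))"
    using sqrt_add_le_add_sqrt[of "d / 2" h] d h unfolding d(2) by (intro mult_left_mono) (auto simp: c_def)
  also have "\<dots> = 2 * exp (r\<^sup>2 * d / 2)"
    using d by (simp add: c_def real_sqrt_divide)
  finally show ?thesis by (simp add: d_def)
qed

lemma weighted_kernel_integral_second_half:
  assumes r: "r > 0" and h: "h > 0" and t: "t0 < t"
  shows "integral {(t0 + t) / 2..t} (\<lambda>s. exp (r\<^sup>2 * (s - t0)) / sqrt (s - t0 + h) / sqrt (t - s))
           \<le> exp (r\<^sup>2 * (t - t0)) * (sqrt 2 / sqrt (t - t0 + h)) * (pi / r)"
proof -
  define d where "d = t - t0"
  define c where "c = exp (r\<^sup>2 * d) * (sqrt 2 / sqrt (d + h))"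
  have d: "d > 0" using t by (simp add: d_def)
  have "continuous_on {(t0 + t) / 2..t} (\<lambda>s. exp (r\<^sup>2 * (s - t0)) / sqrt (s - t0 + h))"
    using h t by (intro continuous_intros) auto
  then have "(\<lambda>s. exp (r\<^sup>2 * (s - t0)) / sqrt (s - t0 + h) / sqrt (t - s)) integrable_on {(t0 + t) / 2..t}"
    using absolutely_integrable_on_div_sqrt absolutely_integrable_on_def by blast
  then have "integral {(t0 + t) / 2..t} (\<lambda>s. exp (r\<^sup>2 * (s - t0)) / sqrt (s - t0 + h) / sqrt (t - s))
      \<le> c * (2 / r * arctan (r * sqrt (t - (t0 + t) / 2)))"
  proof (rule has_integral_le[OF integrable_integral
        has_integral_mult_right[OF has_integral_arctan_kernel[OF _ r]]])
    fix s assume s: "s \<in> {(t0 + t) / 2..t}"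
    show "exp (r\<^sup>2 * (s - t0)) / sqrt (s - t0 + h) / sqrt (t - s)
        \<le> c * (1 / ((1 + r\<^sup>2 * (t - s)) * sqrt (t - s)))"
    proof (cases "s = t")
      case False
      then have ts: "t - s > 0" using s by auto
      then have "1 + r\<^sup>2 * (t - s) > 0" by (simp add: add_pos_nonneg)
      have "exp (r\<^sup>2 * (s - t0)) = exp (r\<^sup>2 * d) * exp (- (r\<^sup>2 * (t - s)))"
        by (simp add: exp_add[symmetric] d_def algebra_simps)
      also have "\<dots> \<le> exp (r\<^sup>2 * d) * (1 / (1 + r\<^sup>2 * (t - s)))"
        using ts by (intro mult_left_mono exp_neg_le_inverse_one_plus) auto
      finally have "exp (r\<^sup>2 * (s - t0)) \<le> exp (r\<^sup>2 * d) * (1 / (1 + r\<^sup>2 * (t - s)))" .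
      moreover have "1 / sqrt (s - t0 + h) \<le> 1 / sqrt ((d + h) / 2)"
        using s d h by (intro divide_left_mono) (auto simp: d_def)
      moreover have "1 / sqrt ((d + h) / 2) = sqrt 2 / sqrt (d + h)"
        by (simp add: real_sqrt_divide)
      ultimately have "exp (r\<^sup>2 * (s - t0)) * (1 / sqrt (s - t0 + h)) * (1 / sqrt (t - s))
          \<le> exp (r\<^sup>2 * d) * (1 / (1 + r\<^sup>2 * (t - s))) * (sqrt 2 / sqrt (d + h)) * (1 / sqrt (t - s))"
        using s h ts d \<open>1 + r\<^sup>2 * (t - s) > 0\<close> by (intro mult_mono) auto
      then show ?thesis by (simp add: c_def ac_simps)
    qed (simp add: c_def)
  qed (use t in auto)
  also have "\<dots> \<le> c * (2 / r * (pi / 2))"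
    using arctan_ubound[THEN less_imp_le] r d h by (intro mult_left_mono) (auto simp: c_def)
  finally show ?thesis by (simp add: c_def d_def)
qed

lemma weighted_kernel_integral_bound:
  assumes r: "r > 0" and h: "h > 0" and t: "t0 \<le> t"
  shows "exp (- r\<^sup>2 * (t - t0)) * sqrt (t - t0 + h) *
           integral {t0..t} (\<lambda>s. exp (r\<^sup>2 * (s - t0)) / sqrt (s - t0 + h) / sqrt (t - s))
         \<le> 2 / r + 2 * sqrt h + sqrt 2 * pi / r"
proof (cases "t = t0")
  case False
  define d where "d = t - t0"
  have d: "d > 0" using False t by (simp add: d_def)
  define K where "K = (\<lambda>s. exp (r\<^sup>2 * (s - t0)) / sqrt (s - t0 + h) / sqrt (t - s))"
  have "continuous_on {t0..t} (\<lambda>s. exp (r\<^sup>2 * (s - t0)) / sqrt (s - t0 + h))"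
    using h by (intro continuous_intros) auto
  then have "K integrable_on {t0..t}"
    unfolding K_def using absolutely_integrable_on_div_sqrt absolutely_integrable_on_def by blast
  then have "integral {t0..t} K = integral {t0..(t0 + t) / 2} K + integral {(t0 + t) / 2..t} K"
    using t by (intro Henstock_Kurzweil_Integration.integral_combine[symmetric]) auto
  also have "\<dots> \<le> 2 * exp (r\<^sup>2 * d / 2) + exp (r\<^sup>2 * d) * (sqrt 2 / sqrt (d + h)) * (pi / r)"
    unfolding K_def d_def
    using weighted_kernel_integral_first_half weighted_kernel_integral_second_half r h d
    by (intro add_mono) (auto simp: d_def)
  finally have "exp (- r\<^sup>2 * d) * sqrt (d + h) * integral {t0..t} K
      \<le> exp (- r\<^sup>2 * d) * sqrt (d + h) *
          (2 * exp (r\<^sup>2 * d / 2) + exp (r\<^sup>2 * d) * (sqrt 2 / sqrt (d + h)) * (pi / r))"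
    using d h by (intro mult_left_mono) auto
  also have "\<dots> = 2 * (sqrt (d + h) * exp (- r\<^sup>2 * d / 2)) + sqrt 2 * pi / r"
    using d h by (simp add: field_simps exp_add[symmetric] exp_minus)
  also have "\<dots> \<le> 2 * ((sqrt d + sqrt h) * exp (- r\<^sup>2 * d / 2)) + sqrt 2 * pi / r"
    using sqrt_add_le_add_sqrt[of d h] d h by (intro add_mono mult_left_mono mult_right_mono) auto
  also have "\<dots> \<le> 2 * (1 / r + sqrt h) + sqrt 2 * pi / r"
  proof -
    have "sqrt h * exp (- r\<^sup>2 * d / 2) \<le> sqrt h * 1"
      using d h by (intro mult_left_mono) auto
    then show ?thesis
      using sqrt_mult_exp_neg_le[OF r, of d] d by (simp add: distrib_right)
  qed
  finally show ?thesis by (simp add: K_def d_def)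
qed (use h r in simp)

section \<open>A weakly singular Gronwall inequality\<close>

lemma kernel_constant_le_half:
  assumes k: "k > 0" and h: "0 < h" "h \<le> 1 / (64 * k\<^sup>2)"
  shows "k * (2 / (40 * k) + 2 * sqrt h + sqrt 2 * pi / (40 * k)) \<le> 1 / 2"
proof -
  have "h \<le> (1 / (8 * k))\<^sup>2"
    using h by (simp add: power_divide power_mult_distrib)
  then have "sqrt h \<le> 1 / (8 * k)"
    using k by (intro real_le_lsqrt) auto
  then have "2 * k * sqrt h \<le> 1 / 4"
    using k by (simp add: field_simps)
  moreover have "sqrt 2 \<le> 3 / 2"
    by (rule real_le_lsqrt) (auto simp: power2_eq_square)
  then have "sqrt 2 * pi \<le> 3 / 2 * 4"
    using pi_less_4 by (intro mult_mono) auto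
  then have "k * (2 / (40 * k) + sqrt 2 * pi / (40 * k)) \<le> 1 / 5"
    using k by (simp add: field_simps)
  ultimately show ?thesis by (simp add: algebra_simps)
qed

lemma weighted_memory_term_le_half:
  fixes \<phi> :: "real \<Rightarrow> real"
  assumes k: "k > 0" and h: "0 < h" "h \<le> 1 / (64 * k\<^sup>2)" and \<tau>: "t0 \<le> \<tau>" and S: "S \<ge> 0"
    and cont: "continuous_on {t0..\<tau>} \<phi>"
    and \<phi>_le: "\<And>s. s \<in> {t0..\<tau>} \<Longrightarrow> \<phi> s \<le> S * exp ((40 * k)\<^sup>2 * (s - t0)) / sqrt (s - t0 + h)"
  shows "exp (- (40 * k)\<^sup>2 * (\<tau> - t0)) * sqrt (\<tau> - t0 + h)
           * integral {t0..\<tau>} (\<lambda>s. k * \<phi> s / sqrt (\<tau> - s)) \<le> S / 2"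
proof -
  define r where "r = 40 * k"
  have r: "r > 0" using k by (simp add: r_def)
  define Q where "Q = integral {t0..\<tau>} (\<lambda>s. exp (r\<^sup>2 * (s - t0)) / sqrt (s - t0 + h) / sqrt (\<tau> - s))"
  have "continuous_on {t0..\<tau>} (\<lambda>s. exp (r\<^sup>2 * (s - t0)) / sqrt (s - t0 + h))"
    "continuous_on {t0..\<tau>} (\<lambda>s. k * \<phi> s)"
    using h by (auto intro!: continuous_intros cont)
  then have "(\<lambda>s. exp (r\<^sup>2 * (s - t0)) / sqrt (s - t0 + h) / sqrt (\<tau> - s)) integrable_on {t0..\<tau>}"
    "(\<lambda>s. k * \<phi> s / sqrt (\<tau> - s)) integrable_on {t0..\<tau>}"
    using absolutely_integrable_on_div_sqrt absolutely_integrable_on_def by blast+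
  then have "integral {t0..\<tau>} (\<lambda>s. k * \<phi> s / sqrt (\<tau> - s))
      \<le> integral {t0..\<tau>} (\<lambda>s. k * S * (exp (r\<^sup>2 * (s - t0)) / sqrt (s - t0 + h) / sqrt (\<tau> - s)))"
  proof (intro integral_le integrable_on_mult_right)
    fix s assume "s \<in> {t0..\<tau>}"
    then have "k * \<phi> s / sqrt (\<tau> - s) \<le> k * (S * exp (r\<^sup>2 * (s - t0)) / sqrt (s - t0 + h)) / sqrt (\<tau> - s)"
      using k \<phi>_le[folded r_def] by (intro divide_right_mono mult_left_mono) auto
    then show "k * \<phi> s / sqrt (\<tau> - s) \<le> k * S * (exp (r\<^sup>2 * (s - t0)) / sqrt (s - t0 + h) / sqrt (\<tau> - s))"
      by simp
  qed
  also have "\<dots> = k * S * Q" unfolding Q_def by (rule integral_mult_right)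
  finally have "exp (- r\<^sup>2 * (\<tau> - t0)) * sqrt (\<tau> - t0 + h) * integral {t0..\<tau>} (\<lambda>s. k * \<phi> s / sqrt (\<tau> - s))
      \<le> S * (k * (exp (- r\<^sup>2 * (\<tau> - t0)) * sqrt (\<tau> - t0 + h) * Q))"
    using h \<tau> by (simp add: mult_left_mono algebra_simps)
  also have "\<dots> \<le> S * (1 / 2)"
  proof (intro mult_left_mono S)
    have "k * (exp (- r\<^sup>2 * (\<tau> - t0)) * sqrt (\<tau> - t0 + h) * Q) \<le> k * (2 / r + 2 * sqrt h + sqrt 2 * pi / r)"
      using weighted_kernel_integral_bound[OF r h(1) \<tau>] k by (simp add: Q_def)
    then show "k * (exp (- r\<^sup>2 * (\<tau> - t0)) * sqrt (\<tau> - t0 + h) * Q) \<le> 1 / 2"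
      using kernel_constant_le_half[OF k h] by (simp add: r_def)
  qed
  finally show ?thesis by (simp add: r_def)
qed

text \<open>
  The weight exp (-(40 k)^2 (s - t0)) sqrt (s - t0 + h) makes the memory term a contraction by
  the factor 1/2 (\<open>weighted_memory_term_le_half\<close>), while it turns the initial-layer term
  b h / sqrt (s - t0 + h) into something at most b h.
\<close>

lemma singular_gronwall:
  fixes \<phi> :: "real \<Rightarrow> real"
  assumes k: "k > 0" and h: "0 < h" "h \<le> 1 / (64 * k\<^sup>2)" and ab: "a \<ge> 0" "b \<ge> 0"
    and cont: "continuous_on {t0..T} \<phi>" and nonneg: "\<And>s. s \<in> {t0..T} \<Longrightarrow> 0 \<le> \<phi> s"
    and rec: "\<And>\<tau>. \<tau> \<in> {t0..T} \<Longrightarrow>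
       \<phi> \<tau> \<le> a * h + b * h / sqrt (\<tau> - t0 + h) + integral {t0..\<tau>} (\<lambda>s. k * \<phi> s / sqrt (\<tau> - s))"
    and t: "t \<in> {t0..T}"
  shows "\<phi> t \<le> 2 * (sqrt (T - t0 + h) * a + b) * exp ((40 * k)\<^sup>2 * (T - t0)) * h / sqrt (t - t0 + h)"
proof -
  define r where "r = 40 * k"
  define \<rho> where "\<rho> s = exp (- r\<^sup>2 * (s - t0)) * sqrt (s - t0 + h)" for s
  have \<rho>_pos: "\<rho> s > 0" if "s \<in> {t0..T}" for s
    using that h by (simp add: \<rho>_def)
  have "continuous_on {t0..T} (\<lambda>s. \<rho> s * \<phi> s)"
    unfolding \<rho>_def by (intro continuous_intros cont)
  then obtain ts where ts: "ts \<in> {t0..T}" and ts_max: "\<And>s. s \<in> {t0..T} \<Longrightarrow> \<rho> s * \<phi> s \<le> \<rho> ts * \<phi> ts"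
    using continuous_attains_sup[of "{t0..T}" "\<lambda>s. \<rho> s * \<phi> s"] t by auto
  define S where "S = \<rho> ts * \<phi> ts"
  have S: "S \<ge> 0" using \<rho>_pos[OF ts] nonneg[OF ts] by (simp add: S_def)
  have \<phi>_le: "\<phi> s \<le> S * exp (r\<^sup>2 * (s - t0)) / sqrt (s - t0 + h)" if s: "s \<in> {t0..T}" for s
  proof -
    have "\<phi> s \<le> S / \<rho> s"
      using ts_max[OF s] \<rho>_pos[OF s] by (simp add: S_def pos_le_divide_eq mult.commute)
    also have "\<dots> = S * exp (r\<^sup>2 * (s - t0)) / sqrt (s - t0 + h)"
      unfolding \<rho>_def mult_minus_left exp_minus by (simp add: divide_inverse inverse_mult_distrib ac_simps)
    finally show ?thesis .
  qed
  define C where "C = sqrt (T - t0 + h) * a + b"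
  have "\<rho> \<tau> * \<phi> \<tau> \<le> C * h + S / 2" if \<tau>: "\<tau> \<in> {t0..T}" for \<tau>
  proof -
    have e: "exp (- r\<^sup>2 * (\<tau> - t0)) \<le> 1" using \<tau> by simp
    have "\<rho> \<tau> \<le> 1 * sqrt (\<tau> - t0 + h)"
      unfolding \<rho>_def using e \<tau> h by (intro mult_right_mono) auto
    also have "\<dots> \<le> sqrt (T - t0 + h)" using \<tau> by simp
    finally have "\<rho> \<tau> * (a * h) \<le> sqrt (T - t0 + h) * (a * h)"
      using ab h by (intro mult_right_mono) auto
    moreover have "\<rho> \<tau> * (b * h / sqrt (\<tau> - t0 + h)) = exp (- r\<^sup>2 * (\<tau> - t0)) * (b * h)"
      using \<tau> h by (simp add: \<rho>_def)
    then have "\<rho> \<tau> * (b * h / sqrt (\<tau> - t0 + h)) \<le> b * h"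
      using e ab h mult_right_mono[OF e, of "b * h"] by simp
    moreover have "\<rho> \<tau> * integral {t0..\<tau>} (\<lambda>s. k * \<phi> s / sqrt (\<tau> - s)) \<le> S / 2"
      unfolding \<rho>_def r_def
      using \<tau> \<phi>_le k h S by (intro weighted_memory_term_le_half continuous_on_subset[OF cont]) (auto simp: r_def)
    moreover have "\<rho> \<tau> * \<phi> \<tau> \<le> \<rho> \<tau> * (a * h + b * h / sqrt (\<tau> - t0 + h)
        + integral {t0..\<tau>} (\<lambda>s. k * \<phi> s / sqrt (\<tau> - s)))"
      using rec[OF \<tau>] \<rho>_pos[OF \<tau>] by (intro mult_left_mono) auto
    ultimately show ?thesis by (simp add: C_def algebra_simps)
  qed
  from this[OF ts] have "S \<le> 2 * C * h" by (simp add: S_def)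
  have "\<phi> t \<le> S * exp (r\<^sup>2 * (t - t0)) / sqrt (t - t0 + h)" by (rule \<phi>_le[OF t])
  also have "\<dots> \<le> 2 * C * h * exp (r\<^sup>2 * (T - t0)) / sqrt (t - t0 + h)"
    using \<open>S \<le> 2 * C * h\<close> S t h by (intro divide_right_mono mult_mono) (auto intro: mult_left_mono)
  finally show ?thesis by (simp add: C_def r_def algebra_simps)
qed

section \<open>Regularity for Abel-type Volterra equations\<close>

lemma norm_le_integral_weakly_singular:
  fixes v :: "real \<Rightarrow> 'a::banach"
  assumes "k \<ge> 0" "continuous_on {a..t} v"
    and "((\<lambda>s. (k / sqrt (t - s)) *\<^sub>R v s) has_integral I) {a..t}"
  shows "norm I \<le> integral {a..t} (\<lambda>s. k * norm (v s) / sqrt (t - s))"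
proof -
  have "continuous_on {a..t} (\<lambda>s. k * norm (v s))"
    using assms(2) by (intro continuous_intros)
  then have "(\<lambda>s. k * norm (v s) / sqrt (t - s)) integrable_on {a..t}"
    using absolutely_integrable_on_div_sqrt absolutely_integrable_on_def by blast
  then have "norm (integral {a..t} (\<lambda>s. (k / sqrt (t - s)) *\<^sub>R v s))
      \<le> integral {a..t} (\<lambda>s. k * norm (v s) / sqrt (t - s))"
    by (rule integral_norm_bound_integral[OF has_integral_integrable[OF assms(3)]])
       (use assms(1) in simp)
  then show ?thesis using integral_unique[OF assms(3)] by simp
qed

lemma norm_integral_initial_layer_le:
  fixes w :: "real \<Rightarrow> 'a::banach"
  assumes h: "0 < h" and b: "a + h \<le> b" and k: "k \<ge> 0"
    and W: "\<And>s. s \<in> {a..a + h} \<Longrightarrow> norm (w s) \<le> W"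
    and int: "(\<lambda>s. (k / sqrt (b - s)) *\<^sub>R w s) integrable_on {a..a + h}"
  shows "norm (integral {a..a + h} (\<lambda>s. (k / sqrt (b - s)) *\<^sub>R w s)) \<le> 2 * k * W * h / sqrt (b - a)"
proof -
  have "norm (w a) \<le> W" using W h by simp
  then have W0: "0 \<le> W" using norm_ge_zero order_trans by blast
  have majorant: "((\<lambda>s. k * W * (1 / sqrt (b - s))) has_integral
      k * W * (2 * sqrt (b - a) - 2 * sqrt (b - (a + h)))) {a..a + h}"
    using h b by (intro has_integral_mult_right has_integral_inverse_sqrt_diff) auto
  have "norm (integral {a..a + h} (\<lambda>s. (k / sqrt (b - s)) *\<^sub>R w s))
      \<le> integral {a..a + h} (\<lambda>s. k * W * (1 / sqrt (b - s)))"
  proof (rule integral_norm_bound_integral[OF int])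
    fix s assume s: "s \<in> {a..a + h}"
    then have "norm ((k / sqrt (b - s)) *\<^sub>R w s) = k / sqrt (b - s) * norm (w s)"
      using b k by simp
    also have "\<dots> \<le> k / sqrt (b - s) * W"
      using s b k W by (intro mult_left_mono) auto
    finally show "norm ((k / sqrt (b - s)) *\<^sub>R w s) \<le> k * W * (1 / sqrt (b - s))"
      by simp
  qed (use majorant in blast)
  also have "\<dots> = k * W * (2 * (sqrt (b - a - h + h) - sqrt (b - a - h)))"
    using majorant by (simp add: integral_unique algebra_simps)
  also have "\<dots> \<le> k * W * (2 * (h / sqrt (b - a - h + h)))"
    using sqrt_add_diff_le[of "b - a - h" h] h b k W0 by (intro mult_left_mono) auto
  finally show ?thesis by (simp add: ac_simps)
qed

lemma has_integral_memory_increment: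
  fixes w :: "real \<Rightarrow> 'a::banach"
  assumes V: "\<And>t. t \<ge> t0 \<Longrightarrow> ((\<lambda>s. (k / sqrt (t - s)) *\<^sub>R w s) has_integral V t) {t0..t}"
    and h: "h > 0" and \<tau>: "t0 \<le> \<tau>"
  shows "((\<lambda>s. (k / sqrt (\<tau> - s)) *\<^sub>R (w (s + h) - w s)) has_integral
           (V (\<tau> + h) - V \<tau> - integral {t0..t0 + h} (\<lambda>s. (k / sqrt (\<tau> + h - s)) *\<^sub>R w s))) {t0..\<tau>}"
proof -
  define kern where "kern = (\<lambda>s. (k / sqrt (\<tau> + h - s)) *\<^sub>R w s)"
  have Vh: "(kern has_integral V (\<tau> + h)) {t0..\<tau> + h}"
    using V \<tau> h by (simp add: kern_def)
  have "kern integrable_on {t0 + h..\<tau> + h}"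
    by (rule integrable_subinterval_real[OF has_integral_integrable[OF Vh]]) (use \<tau> h in auto)
  moreover have "integral {t0..t0 + h} kern + integral {t0 + h..\<tau> + h} kern = integral {t0..\<tau> + h} kern"
    by (rule Henstock_Kurzweil_Integration.integral_combine[OF _ _ has_integral_integrable[OF Vh]])
       (use \<tau> h in auto)
  ultimately have "(kern has_integral (V (\<tau> + h) - integral {t0..t0 + h} kern)) {t0 + h..\<tau> + h}"
    using integral_unique[OF Vh] by (metis add_diff_cancel_left' integrable_integral)
  moreover have "kern \<circ> (+) h = (\<lambda>s. (k / sqrt (\<tau> - s)) *\<^sub>R w (s + h))"
    by (auto simp: kern_def algebra_simps)
  ultimately have "((\<lambda>s. (k / sqrt (\<tau> - s)) *\<^sub>R w (s + h)) has_integral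
      (V (\<tau> + h) - integral {t0..t0 + h} kern)) {t0..\<tau>}"
    using has_integral_shift_Icc_real[of kern h _ t0 \<tau>] by simp
  from has_integral_diff[OF this V[OF \<tau>]] show ?thesis
    by (simp add: kern_def scaleR_diff_right algebra_simps)
qed

lemma abel_increment_recursive_bound:
  fixes w F :: "real \<Rightarrow> 'a::banach"
  assumes k: "k > 0" and wc: "continuous_on {t0..} w" and Fc: "continuous_on {t0..} F"
    and eq: "\<And>t. t \<ge> t0 \<Longrightarrow>
      ((\<lambda>s. (k / sqrt (t - s)) *\<^sub>R w s) has_integral (w0 + integral {t0..t} F - w t)) {t0..t}"
    and h: "h > 0" and \<tau>: "t0 \<le> \<tau>" "\<tau> + h \<le> T"
    and W: "\<And>s. s \<in> {t0..T} \<Longrightarrow> norm (w s) \<le> W"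
    and MF: "\<And>s. s \<in> {t0..T} \<Longrightarrow> norm (F s) \<le> MF"
  shows "norm (w (\<tau> + h) - w \<tau>) \<le> MF * h + 2 * k * W * h / sqrt (\<tau> - t0 + h)
           + integral {t0..\<tau>} (\<lambda>s. k * norm (w (s + h) - w s) / sqrt (\<tau> - s))"
proof -
  define V where "V t = w0 + integral {t0..t} F - w t" for t
  define I1 where "I1 = integral {t0..t0 + h} (\<lambda>s. (k / sqrt (\<tau> + h - s)) *\<^sub>R w s)"
  have V: "((\<lambda>s. (k / sqrt (t - s)) *\<^sub>R w s) has_integral V t) {t0..t}" if "t0 \<le> t" for t
    using eq that by (simp add: V_def)
  have memory_integral: "((\<lambda>s. (k / sqrt (\<tau> - s)) *\<^sub>R (w (s + h) - w s)) has_integral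
      (V (\<tau> + h) - V \<tau> - I1)) {t0..\<tau>}"
    unfolding I1_def by (rule has_integral_memory_increment[OF V h \<tau>(1)])
  have "continuous_on {t0..\<tau>} (\<lambda>s. w (s + h))"
    by (rule continuous_on_compose2[OF wc]) (use h in \<open>auto intro!: continuous_intros\<close>)
  then have "continuous_on {t0..\<tau>} (\<lambda>s. w (s + h) - w s)"
    by (intro continuous_intros continuous_on_subset[OF wc]) auto
  with memory_integral have memory: "norm (V (\<tau> + h) - V \<tau> - I1)
      \<le> integral {t0..\<tau>} (\<lambda>s. k * norm (w (s + h) - w s) / sqrt (\<tau> - s))"
    using k by (intro norm_le_integral_weakly_singular) auto
  have "norm I1 \<le> 2 * k * W * h / sqrt (\<tau> + h - t0)"
    unfolding I1_def using W \<tau> h k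
    by (intro norm_integral_initial_layer_le integrable_subinterval_real[OF has_integral_integrable[OF V]])
       auto
  then have initial: "norm I1 \<le> 2 * k * W * h / sqrt (\<tau> - t0 + h)"
    by (simp add: algebra_simps)
  have "integral {t0..\<tau> + h} F = integral {t0..\<tau>} F + integral {\<tau>..\<tau> + h} F"
    using \<tau> h by (intro Henstock_Kurzweil_Integration.integral_combine[symmetric]
        integrable_continuous_real continuous_on_subset[OF Fc]) auto
  then have decomposition:
    "w (\<tau> + h) - w \<tau> = integral {\<tau>..\<tau> + h} F - I1 - (V (\<tau> + h) - V \<tau> - I1)"
    by (simp add: V_def algebra_simps)
  have "norm (integral {\<tau>..\<tau> + h} F) \<le> MF * h"
    using integral_bound[of \<tau> "\<tau> + h" F MF] continuous_on_subset[OF Fc, of "{\<tau>..\<tau> + h}"] MF \<tau> h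
    by auto
  moreover have "norm (w (\<tau> + h) - w \<tau>)
      \<le> norm (integral {\<tau>..\<tau> + h} F) + norm I1 + norm (V (\<tau> + h) - V \<tau> - I1)"
    unfolding decomposition
    by (rule order_trans[OF norm_triangle_ineq4 add_right_mono[OF norm_triangle_ineq4]])
  ultimately show ?thesis using initial memory by linarith
qed

lemma abel_increment_bound:
  fixes w F :: "real \<Rightarrow> 'a::banach"
  assumes k: "k > 0" and wc: "continuous_on {t0..} w" and Fc: "continuous_on {t0..} F"
    and eq: "\<And>t. t \<ge> t0 \<Longrightarrow>
      ((\<lambda>s. (k / sqrt (t - s)) *\<^sub>R w s) has_integral (w0 + integral {t0..t} F - w t)) {t0..t}"
  shows "\<exists>C\<ge>0. \<forall>t h. t0 \<le> t \<longrightarrow> 0 < h \<longrightarrow> h \<le> 1 / (64 * k\<^sup>2) \<longrightarrow> t + h \<le> T \<longrightarrow>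
           norm (w (t + h) - w t) \<le> C * h / sqrt (t - t0 + h)"
proof (cases "t0 \<le> T")
  case True
  have "bounded (w ` {t0..T})" "bounded (F ` {t0..T})"
    by (intro compact_imp_bounded compact_continuous_image continuous_on_subset[OF wc]
        continuous_on_subset[OF Fc] compact_Icc; auto)+
  then obtain W MF where W: "\<And>s. s \<in> {t0..T} \<Longrightarrow> norm (w s) \<le> W"
    and MF: "\<And>s. s \<in> {t0..T} \<Longrightarrow> norm (F s) \<le> MF"
    unfolding bounded_iff by (meson imageI)
  have "norm (w t0) \<le> W" "norm (F t0) \<le> MF"
    using W MF True by auto
  then have "0 \<le> W" "0 \<le> MF"
    by (meson norm_ge_zero order_trans)+
  define C where "C = 2 * (sqrt (T - t0) * MF + 2 * k * W) * exp ((40 * k)\<^sup>2 * (T - t0))"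
  show ?thesis
  proof (intro exI[of _ C] conjI allI impI)
    show "C \<ge> 0" using \<open>0 \<le> W\<close> \<open>0 \<le> MF\<close> k True by (simp add: C_def)
    fix t h assume t: "t0 \<le> t" and h: "0 < h" "h \<le> 1 / (64 * k\<^sup>2)" and tT: "t + h \<le> T"
    have growth: "exp ((40 * k)\<^sup>2 * (T - h - t0)) \<le> exp ((40 * k)\<^sup>2 * (T - t0))"
      using h by (simp add: mult_left_mono)
    have "norm (w (t + h) - w t) \<le> 2 * (sqrt (T - h - t0 + h) * MF + 2 * k * W)
        * exp ((40 * k)\<^sup>2 * (T - h - t0)) * h / sqrt (t - t0 + h)"
    proof (rule singular_gronwall[where \<phi> = "\<lambda>s. norm (w (s + h) - w s)", OF k h])
      show "continuous_on {t0..T - h} (\<lambda>s. norm (w (s + h) - w s))"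
        using h by (intro continuous_intros continuous_on_subset[OF wc]
            continuous_on_compose2[OF wc]) (auto intro!: continuous_intros)
      show "norm (w (\<tau> + h) - w \<tau>) \<le> MF * h + 2 * k * W * h / sqrt (\<tau> - t0 + h)
          + integral {t0..\<tau>} (\<lambda>s. k * norm (w (s + h) - w s) / sqrt (\<tau> - s))"
        if "\<tau> \<in> {t0..T - h}" for \<tau>
        using that h W MF by (intro abel_increment_recursive_bound[OF k wc Fc eq]) auto
    qed (use \<open>0 \<le> W\<close> \<open>0 \<le> MF\<close> k t tT in auto)
    also have "\<dots> \<le> C * h / sqrt (t - t0 + h)"
    proof -
      have shift: "T - h - t0 + h = T - t0" by simp
      have "2 * (sqrt (T - h - t0 + h) * MF + 2 * k * W) * exp ((40 * k)\<^sup>2 * (T - h - t0)) \<le> C"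
        unfolding C_def shift using growth \<open>0 \<le> W\<close> \<open>0 \<le> MF\<close> k True by (intro mult_left_mono) auto
      then show ?thesis using h t by (intro divide_right_mono mult_right_mono) auto
    qed
    finally show "norm (w (t + h) - w t) \<le> C * h / sqrt (t - t0 + h)" .
  qed
qed auto

lemma holder_half_of_increment_bound:
  fixes w :: "real \<Rightarrow> 'a::real_normed_vector"
  assumes h0: "h0 > 0" and C: "C \<ge> 0" and W: "\<And>s. s \<in> {t0..T} \<Longrightarrow> norm (w s) \<le> W"
    and incr: "\<And>t h. t0 \<le> t \<Longrightarrow> 0 < h \<Longrightarrow> h \<le> h0 \<Longrightarrow> t + h \<le> T \<Longrightarrow>
      norm (w (t + h) - w t) \<le> C * h / sqrt (t - t0 + h)"
  shows "holder_on (1/2) {t0..T} w"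
proof -
  define K where "K = max C (2 * W / sqrt h0)"
  have ordered: "norm (w t - w s) \<le> K * sqrt (t - s)"
    if st: "s \<in> {t0..T}" "t \<in> {t0..T}" "s \<le> t" for s t
  proof (cases "t - s \<le> h0")
    case True
    show ?thesis
    proof (cases "s = t")
      case False
      have "norm (w (s + (t - s)) - w s) \<le> C * (t - s) / sqrt (s - t0 + (t - s))"
        using st True False by (intro incr) auto
      also have "\<dots> \<le> C * (t - s) / sqrt (t - s)"
        using st C False by (intro divide_left_mono mult_nonneg_nonneg) auto
      also have "\<dots> = C * ((t - s) / sqrt (t - s))"
        by simp
      also have "\<dots> = C * sqrt (t - s)"
        using st by (simp add: real_div_sqrt)
      also have "\<dots> \<le> K * sqrt (t - s)"
        using st by (intro mult_right_mono) (auto simp: K_def)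
      finally show ?thesis by simp
    qed simp
  next
    case False
    have "0 \<le> W" using W[OF st(1)] norm_ge_zero order_trans by blast
    have "norm (w t - w s) \<le> W + W"
      using norm_triangle_ineq4[of "w t" "w s"] W st by (smt (verit))
    also have "\<dots> = 2 * W / sqrt h0 * sqrt h0" using h0 by simp
    also have "\<dots> \<le> 2 * W / sqrt h0 * sqrt (t - s)"
      using False \<open>0 \<le> W\<close> h0 by (intro mult_left_mono) auto
    also have "\<dots> \<le> K * sqrt (t - s)"
      using st by (intro mult_right_mono) (auto simp: K_def)
    finally show ?thesis .
  qed
  show ?thesis
    unfolding holder_on_def
  proof (intro exI[of _ K] ballI)
    fix s t assume "s \<in> {t0..T}" "t \<in> {t0..T}"
    then show "norm (w t - w s) \<le> K * \<bar>t - s\<bar> powr (1/2)"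
      using ordered[of s t] ordered[of t s]
      by (cases "s \<le> t") (auto simp: powr_half_sqrt norm_minus_commute)
  qed
qed

lemma locally_lipschitz_of_increment_bound:
  fixes w :: "real \<Rightarrow> 'a::real_normed_vector"
  assumes h0: "h0 > 0" and \<epsilon>: "\<epsilon> > 0"
    and incr: "\<And>T. \<exists>C\<ge>0. \<forall>t h. t0 \<le> t \<longrightarrow> 0 < h \<longrightarrow> h \<le> h0 \<longrightarrow> t + h \<le> T \<longrightarrow>
      norm (w (t + h) - w t) \<le> C * h / sqrt (t - t0 + h)"
  shows "locally_lipschitz_on {t0 + \<epsilon>..} w"
  unfolding locally_lipschitz_on_def
proof
  fix x assume "x \<in> {t0 + \<epsilon>..}"
  obtain C where C: "C \<ge> 0" and Cb: "\<And>t h. t0 \<le> t \<Longrightarrow> 0 < h \<Longrightarrow> h \<le> h0 \<Longrightarrow> t + h \<le> x + h0 \<Longrightarrow>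
      norm (w (t + h) - w t) \<le> C * h / sqrt (t - t0 + h)"
    using incr[of "x + h0"] by blast
  define U where "U = ball x (h0 / 2)"
  have ordered: "norm (w t - w s) \<le> C / sqrt \<epsilon> * (t - s)"
    if st: "s \<in> U \<inter> {t0 + \<epsilon>..}" "t \<in> U \<inter> {t0 + \<epsilon>..}" "s < t" for s t
  proof -
    have "dist x s < h0 / 2" "dist x t < h0 / 2"
      using st by (auto simp: U_def)
    then have "t - s \<le> h0" "t \<le> x + h0"
      unfolding dist_real_def by arith+
    then have "norm (w (s + (t - s)) - w s) \<le> C * (t - s) / sqrt (s - t0 + (t - s))"
      using st \<epsilon> by (intro Cb) auto
    also have "\<dots> \<le> C * (t - s) / sqrt \<epsilon>"
      using st C \<epsilon> by (intro divide_left_mono mult_nonneg_nonneg) auto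
    finally show ?thesis by simp
  qed
  show "\<exists>U C. open U \<and> x \<in> U \<and> C-lipschitz_on (U \<inter> {t0 + \<epsilon>..}) w"
  proof (intro exI conjI)
    show "(C / sqrt \<epsilon>)-lipschitz_on (U \<inter> {t0 + \<epsilon>..}) w"
    proof (rule lipschitz_onI)
      fix a b assume "a \<in> U \<inter> {t0 + \<epsilon>..}" "b \<in> U \<inter> {t0 + \<epsilon>..}"
      then show "dist (w a) (w b) \<le> C / sqrt \<epsilon> * dist a b"
        using ordered[of a b] ordered[of b a]
        by (cases a b rule: linorder_cases) (auto simp: dist_norm norm_minus_commute)
    qed (use C \<epsilon> in simp)
  qed (use h0 in \<open>auto simp: U_def\<close>)
qed

theorem abel_volterra_regularity:
  fixes w F :: "real \<Rightarrow> 'a::banach"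
  assumes k: "k > 0" and wc: "continuous_on {t0..} w" and Fc: "continuous_on {t0..} F"
    and eq: "\<And>t. t \<ge> t0 \<Longrightarrow>
      ((\<lambda>s. F s - (k / sqrt (t - s)) *\<^sub>R w s) has_integral (w t - w0)) {t0..t}"
    and \<epsilon>: "\<epsilon> > 0"
  shows "holder_on (1/2) {t0..<t0 + \<epsilon>} w \<and> locally_lipschitz_on {t0 + \<epsilon>..} w"
proof
  have "((\<lambda>s. (k / sqrt (t - s)) *\<^sub>R w s) has_integral (w0 + integral {t0..t} F - w t)) {t0..t}"
    if "t \<ge> t0" for t
  proof -
    have "(F has_integral integral {t0..t} F) {t0..t}"
      by (intro integrable_integral integrable_continuous_real continuous_on_subset[OF Fc]) auto
    from has_integral_diff[OF this eq[OF that]] show ?thesis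
      by (simp add: algebra_simps)
  qed
  note incr = abel_increment_bound[OF k wc Fc this]
  have h0: "1 / (64 * k\<^sup>2) > 0" using k by simp
  obtain C where "C \<ge> 0" and "\<forall>t h. t0 \<le> t \<longrightarrow> 0 < h \<longrightarrow> h \<le> 1 / (64 * k\<^sup>2) \<longrightarrow> t + h \<le> t0 + \<epsilon> \<longrightarrow>
      norm (w (t + h) - w t) \<le> C * h / sqrt (t - t0 + h)"
    using incr by blast
  moreover have "bounded (w ` {t0..t0 + \<epsilon>})"
    by (intro compact_imp_bounded compact_continuous_image continuous_on_subset[OF wc]) auto
  then obtain W where "\<And>s. s \<in> {t0..t0 + \<epsilon>} \<Longrightarrow> norm (w s) \<le> W"
    unfolding bounded_iff by (meson imageI)
  ultimately have "holder_on (1/2) {t0..t0 + \<epsilon>} w"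
    using h0 by (intro holder_half_of_increment_bound) auto
  then show "holder_on (1/2) {t0..<t0 + \<epsilon>} w"
    unfolding holder_on_def by (meson atLeastLessThan_subseteq_atLeastAtMost_iff order_refl subsetD)
  show "locally_lipschitz_on {t0 + \<epsilon>..} w"
    using locally_lipschitz_of_increment_bound[OF h0 \<epsilon> incr] .
qed

section \<open>The Maxey-Riley forcing\<close>

lemma norm_diff_along_axis_le:
  fixes F :: "real^'n \<Rightarrow> real \<Rightarrow> 'b::real_normed_vector"
  assumes der: "\<And>h. h \<in> {min 0 \<delta>..max 0 \<delta>} \<Longrightarrow>
      ((\<lambda>k. F (z + h *\<^sub>R axis i 1 + k *\<^sub>R axis i 1) t) has_vector_derivative pdx i F (z + h *\<^sub>R axis i 1) t) (at 0)"
    and bnd: "\<And>h. h \<in> {min 0 \<delta>..max 0 \<delta>} \<Longrightarrow> norm (pdx i F (z + h *\<^sub>R axis i 1) t) \<le> L"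
  shows "norm (F (z + \<delta> *\<^sub>R axis i 1) t - F z t) \<le> L * \<bar>\<delta>\<bar>"
proof -
  define f where "f h = F (z + h *\<^sub>R axis i 1) t" for h
  have f_deriv: "(f has_vector_derivative pdx i F (z + h *\<^sub>R axis i 1) t) (at h within {min 0 \<delta>..max 0 \<delta>})"
    if "h \<in> {min 0 \<delta>..max 0 \<delta>}" for h
  proof -
    have "((\<lambda>s. s - h) has_vector_derivative 1) (at h)"
      by (auto intro!: derivative_eq_intros)
    from vector_diff_chain_at[OF this] der[OF that]
    have "((\<lambda>k. F (z + h *\<^sub>R axis i 1 + k *\<^sub>R axis i 1) t) \<circ> (\<lambda>s. s - h)
        has_vector_derivative pdx i F (z + h *\<^sub>R axis i 1) t) (at h)"
      by simp
    moreover have "(\<lambda>k. F (z + h *\<^sub>R axis i 1 + k *\<^sub>R axis i 1) t) \<circ> (\<lambda>s. s - h) = f"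
      by (auto simp: f_def o_def algebra_simps)
    ultimately show ?thesis by (simp add: has_vector_derivative_at_within)
  qed
  have "norm (f \<delta> - f 0) \<le> L * \<bar>\<delta> - 0\<bar>"
    by (rule norm_diff_le_of_vector_derivative_bound[of "{min 0 \<delta>..max 0 \<delta>}" f])
       (use f_deriv bnd in auto)
  then show ?thesis by (simp add: f_def)
qed

lemma norm_diff_le_sum_partials:
  fixes F :: "real^'n \<Rightarrow> real \<Rightarrow> 'b::real_normed_vector"
  assumes der: "\<And>z i. z \<in> D \<Longrightarrow> ((\<lambda>h. F (z + h *\<^sub>R axis i 1) t) has_vector_derivative pdx i F z t) (at 0)"
    and bnd: "\<And>z i. z \<in> D \<Longrightarrow> norm (pdx i F z t) \<le> L"
    and box: "\<And>z. (\<And>i. \<bar>z $ i - x $ i\<bar> \<le> \<bar>x' $ i - x $ i\<bar>) \<Longrightarrow> z \<in> D"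
  shows "norm (F x' t - F x t) \<le> L * (\<Sum>i\<in>UNIV. \<bar>x' $ i - x $ i\<bar>)"
proof -
  define mix where "mix S = (\<chi> j. if j \<in> S then x' $ j else x $ j)" for S
  have "norm (F (mix S) t - F x t) \<le> L * (\<Sum>i\<in>S. \<bar>x' $ i - x $ i\<bar>)" if "finite S" for S
    using that
  proof (induction S rule: finite_induct)
    case empty
    have "mix {} = x" by (simp add: mix_def vec_eq_iff)
    then show ?case by simp
  next
    case (insert i S)
    define \<delta> where "\<delta> = x' $ i - x $ i"
    have step: "mix (insert i S) = mix S + \<delta> *\<^sub>R axis i 1"
      using insert.hyps by (auto simp: vec_eq_iff mix_def axis_def \<delta>_def)
    have in_D: "mix S + h *\<^sub>R axis i 1 \<in> D" if "h \<in> {min 0 \<delta>..max 0 \<delta>}" for h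
      using that insert.hyps by (intro box) (auto simp: mix_def axis_def \<delta>_def)
    have "norm (F (mix (insert i S)) t - F (mix S) t) \<le> L * \<bar>x' $ i - x $ i\<bar>"
      unfolding step \<delta>_def[symmetric]
      using der[OF in_D] bnd[OF in_D] by (intro norm_diff_along_axis_le) (auto simp: add.assoc)
    then show ?case
      using insert norm_triangle_le[of "F (mix (insert i S)) t - F (mix S) t" "F (mix S) t - F x t"]
      by (simp add: algebra_simps)
  qed
  moreover have "mix UNIV = x'" by (simp add: mix_def vec_eq_iff)
  ultimately show ?thesis by (metis finite)
qed

lemma C1_bounded_norm_diff_le:
  fixes F :: "real^'n \<Rightarrow> real \<Rightarrow> 'b::real_normed_vector"
  assumes C1: "C1_bounded D t0 F L" and ball: "ball x1 r \<subseteq> D" and x: "dist x x1 < r"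
    and s: "s \<ge> t0" "s1 \<ge> t0"
  shows "norm (F x s - F x1 s1) \<le> L * \<bar>s - s1\<bar> + L * (\<Sum>i\<in>UNIV. \<bar>x $ i - x1 $ i\<bar>)"
proof -
  have C1': "((\<lambda>s. F z s) has_vector_derivative pdt {t0..} F z t) (at t within {t0..})"
    "norm (pdt {t0..} F z t) \<le> L"
    "((\<lambda>h. F (z + h *\<^sub>R axis i 1) t) has_vector_derivative pdx i F z t) (at 0)"
    "norm (pdx i F z t) \<le> L"
    if "z \<in> D" "t \<ge> t0" for z t i
    using C1 that unfolding C1_bounded_def by (meson less_imp_le)+
  have "x \<in> D" using ball x by (auto simp: dist_commute)
  then have "norm (F x s - F x s1) \<le> L * \<bar>s - s1\<bar>"
    by (intro norm_diff_le_of_vector_derivative_bound[of "{t0..}" "F x" "pdt {t0..} F x"])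
       (use C1' s in auto)
  moreover have "norm (F x s1 - F x1 s1) \<le> L * (\<Sum>i\<in>UNIV. \<bar>x $ i - x1 $ i\<bar>)"
  proof (rule norm_diff_le_sum_partials[of D])
    fix z assume "\<And>i. \<bar>z $ i - x1 $ i\<bar> \<le> \<bar>x $ i - x1 $ i\<bar>"
    then have "norm (z - x1) \<le> norm (x - x1)"
      by (intro norm_le_componentwise_cart) simp
    then show "z \<in> D" using ball x by (auto simp: dist_norm norm_minus_commute)
  qed (use C1' s in auto)
  ultimately show ?thesis by (rule norm_diff_triangle_le)
qed

lemma continuous_on_C1_bounded_along_curve:
  fixes F :: "real^'n \<Rightarrow> real \<Rightarrow> 'b::real_normed_vector"
  assumes D: "open D" and C1: "C1_bounded D t0 F L" and yc: "continuous_on {t0..} y"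
    and yD: "\<And>t. t \<ge> t0 \<Longrightarrow> y t \<in> D"
  shows "continuous_on {t0..} (\<lambda>s. F (y s) s)"
  unfolding continuous_on_def
proof
  fix s1 assume s1: "s1 \<in> {t0..}"
  obtain r where r: "r > 0" "ball (y s1) r \<subseteq> D"
    using D yD s1 open_contains_ball by force
  have y_tendsto: "(y \<longlongrightarrow> y s1) (at s1 within {t0..})"
    using yc s1 by (simp add: continuous_on_def)
  have "((\<lambda>s. F (y s) s - F (y s1) s1) \<longlongrightarrow> 0) (at s1 within {t0..})"
  proof (rule Lim_null_comparison)
    show "\<forall>\<^sub>F s in at s1 within {t0..}. norm (F (y s) s - F (y s1) s1)
        \<le> L * \<bar>s - s1\<bar> + L * (\<Sum>i\<in>UNIV. \<bar>y s $ i - y s1 $ i\<bar>)"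
      using tendstoD[OF y_tendsto r(1)] eventually_at_filter[of _ s1 "{t0..}"] s1
      by (auto elim: eventually_mono intro!: C1_bounded_norm_diff_le[OF C1 r(2)])
    have "((\<lambda>s. L * \<bar>s - s1\<bar> + L * (\<Sum>i\<in>UNIV. \<bar>y s $ i - y s1 $ i\<bar>)) \<longlongrightarrow>
        L * \<bar>s1 - s1\<bar> + L * (\<Sum>i\<in>UNIV. \<bar>y s1 $ i - y s1 $ i\<bar>)) (at s1 within {t0..})"
      by (intro tendsto_intros y_tendsto)
    then show "((\<lambda>s. L * \<bar>s - s1\<bar> + L * (\<Sum>i\<in>UNIV. \<bar>y s $ i - y s1 $ i\<bar>)) \<longlongrightarrow> 0)
        (at s1 within {t0..})"
      by simp
  qed
  then show "((\<lambda>s. F (y s) s) \<longlongrightarrow> F (y s1) s1) (at s1 within {t0..})"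
    by (simp add: LIM_zero_iff)
qed

lemma M_u_mult_vec:
  fixes u :: "real^'n \<Rightarrow> real \<Rightarrow> real^'n"
  assumes "\<And>j. ((\<lambda>h. u (x + h *\<^sub>R axis j 1) t) has_vector_derivative pdx j u x t) (at 0)"
    and "\<And>j. ((\<lambda>h. lap u (x + h *\<^sub>R axis j 1) t) has_vector_derivative pdx j (lap u) x t) (at 0)"
  shows "M_u mu gam u x t *v v = (\<Sum>j\<in>UNIV. v $ j *\<^sub>R pdx j (A_u mu gam u) x t)"
proof -
  have "pdx j (A_u mu gam u) x t = pdx j u x t + (gam / 6 / mu) *\<^sub>R pdx j (lap u) x t" for j
  proof -
    have "((\<lambda>h. A_u mu gam u (x + h *\<^sub>R axis j 1) t) has_vector_derivative
        pdx j u x t + (gam / 6 / mu) *\<^sub>R pdx j (lap u) x t) (at 0)"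
      unfolding A_u_def using assms
      by (intro has_vector_derivative_add bounded_linear.has_vector_derivative[OF bounded_linear_scaleR_right])
    then show ?thesis unfolding pdx_def by (rule vector_derivative_at)
  qed
  then show ?thesis
    by (simp add: M_u_def vec_eq_iff matrix_vector_mult_def jac_def sum_component algebra_simps)
qed

lemma maxey_riley_forcing_continuous:
  fixes u :: "real^'n \<Rightarrow> real \<Rightarrow> real^'n" and y w :: "real \<Rightarrow> real^'n"
  assumes D: "open D"
    and u_diff: "\<And>x t j. x \<in> D \<Longrightarrow> t \<ge> t0 \<Longrightarrow>
      ((\<lambda>h. u (x + h *\<^sub>R axis j 1) t) has_vector_derivative pdx j u x t) (at 0) \<and>
      ((\<lambda>h. lap u (x + h *\<^sub>R axis j 1) t) has_vector_derivative pdx j (lap u) x t) (at 0)"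
    and A: "C1_bounded D t0 (A_u mu gam u) La" and B: "C1_bounded D t0 (B_u Rr mu gam g u) Lb"
    and yc: "continuous_on {t0..} y" and yD: "\<And>t. t \<ge> t0 \<Longrightarrow> y t \<in> D"
    and wc: "continuous_on {t0..} w"
  shows "continuous_on {t0..}
    (\<lambda>s. - mu *\<^sub>R w s - M_u mu gam u (y s) s *v w s + B_u Rr mu gam g u (y s) s)"
proof -
  have "continuous_on {t0..} (\<lambda>s. pdx j (A_u mu gam u) (y s) s)" for j
  proof -
    have "continuous_on (D \<times> {t0..}) (\<lambda>(x, t). pdx j (A_u mu gam u) x t)"
      using A unfolding C1_bounded_def by blast
    moreover have "continuous_on {t0..} (\<lambda>s. (y s, s))"
      by (intro continuous_intros yc)
    ultimately have "continuous_on {t0..} (\<lambda>s. (\<lambda>(x, t). pdx j (A_u mu gam u) x t) (y s, s))"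
      by (rule continuous_on_compose2) (auto intro: yD)
    then show ?thesis by simp
  qed
  then have "continuous_on {t0..} (\<lambda>s. \<Sum>j\<in>UNIV. w s $ j *\<^sub>R pdx j (A_u mu gam u) (y s) s)"
    by (intro continuous_intros wc)
  then have "continuous_on {t0..} (\<lambda>s. M_u mu gam u (y s) s *v w s)"
  proof (rule continuous_on_eq)
    fix s assume "s \<in> {t0..}"
    then show "(\<Sum>j\<in>UNIV. w s $ j *\<^sub>R pdx j (A_u mu gam u) (y s) s) = M_u mu gam u (y s) s *v w s"
      using u_diff yD by (intro M_u_mult_vec[symmetric]) auto
  qed
  then show ?thesis
    by (intro continuous_intros wc continuous_on_C1_bounded_along_curve[OF D B yc yD])
qed

theorem lemma4p2:
  fixes D :: "(real^'n) set"
    and u :: "real^'n \<Rightarrow> real \<Rightarrow> real^'n"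
    and g y0 w0 :: "real^'n"
    and y w :: "real \<Rightarrow> real^'n"
    and t0 Rr mu kappa gam :: real
  assumes D_open: "open D"
    and t0: "t0 \<ge> 0"
    and pos: "Rr > 0" "mu > 0" "kappa > 0" "gam > 0"
    and u_smooth: "\<forall>x\<in>D. \<forall>t\<ge>t0. \<forall>j.
        ((\<lambda>h. u (x + h *\<^sub>R axis j 1) t) has_vector_derivative pdx j u x t) (at 0) \<and>
        ((\<lambda>h. pdx j u (x + h *\<^sub>R axis j 1) t) has_vector_derivative pdx j (pdx j u) x t) (at 0) \<and>
        ((\<lambda>h. lap u (x + h *\<^sub>R axis j 1) t) has_vector_derivative pdx j (lap u) x t) (at 0) \<and>
        ((\<lambda>s. u x s) has_vector_derivative pdt {0..} u x t) (at t within {0..}) \<and>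
        ((\<lambda>s. lap u x s) has_vector_derivative pdt {0..} (lap u) x t) (at t within {0..})"
    and star: "\<exists>Lb. C1_bounded D t0 (A_u mu gam u) Lb \<and> C1_bounded D t0 (B_u Rr mu gam g u) Lb"
    and y_cont: "continuous_on {t0..} y"
    and w_cont: "continuous_on {t0..} w"
    and y_in: "\<forall>t\<ge>t0. y t \<in> D"
    and y_eq: "\<forall>t\<ge>t0. ((\<lambda>s. w s + A_u mu gam u (y s) s) has_integral (y t - y0)) {t0..t}"
    and w_eq: "\<forall>t\<ge>t0. ((\<lambda>s. - mu *\<^sub>R w s - M_u mu gam u (y s) s *v w s
                               - (kappa * sqrt mu / sqrt (t - s)) *\<^sub>R w s
                               + B_u Rr mu gam g u (y s) s) has_integral (w t - w0)) {t0..t}"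
  shows "\<forall>\<epsilon>>0. holder_on (1/2) {t0..<t0+\<epsilon>} w \<and> locally_lipschitz_on {t0+\<epsilon>..} w"
proof -
  obtain Lb where A: "C1_bounded D t0 (A_u mu gam u) Lb" and B: "C1_bounded D t0 (B_u Rr mu gam g u) Lb"
    using star by blast
  define F where "F s = - mu *\<^sub>R w s - M_u mu gam u (y s) s *v w s + B_u Rr mu gam g u (y s) s" for s
  have "continuous_on {t0..} F"
    unfolding F_def using u_smooth y_in
    by (intro maxey_riley_forcing_continuous[OF D_open _ A B y_cont _ w_cont]) auto
  moreover have "((\<lambda>s. F s - (kappa * sqrt mu / sqrt (t - s)) *\<^sub>R w s) has_integral (w t - w0)) {t0..t}"
    if "t \<ge> t0" for t
  proof -
    have "(\<lambda>s. F s - (kappa * sqrt mu / sqrt (t - s)) *\<^sub>R w s) = (\<lambda>s. - mu *\<^sub>R w s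
        - M_u mu gam u (y s) s *v w s - (kappa * sqrt mu / sqrt (t - s)) *\<^sub>R w s + B_u Rr mu gam g u (y s) s)"
      by (simp add: F_def fun_eq_iff)
    then show ?thesis using w_eq that by simp
  qed
  moreover have "kappa * sqrt mu > 0" using pos by simp
  ultimately show ?thesis
    using abel_volterra_regularity[OF _ w_cont] by blast
qed

end
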